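(* Let $\sigma$ be a $d$-dimensional quantum state with $\sigma\ge\gamma I$ for some $\gamma>0$, let $\rho_1,\dots,\rho_T$ be $d$-dimensional quantum states and $\rho=\frac1T\sum_{t=1}^T\rho_t$. Then $$\frac1T\sum_{t=1}^T\big(1+D_{\chi^2}(\rho_t\,\|\,\sigma)\big)\le\sqrt{\frac d\gamma}\,D_{\chi^2}(\rho\,\|\,\sigma)^{1/2}+d.$$
   Context: Bures $\chi^2$-divergence: writing $\sigma=U\,\mathrm{diag}(q_1,\dots,q_d)U^\dagger$ with $U$ unitary and $\rho'=U^\dagger\rho U$, $D_{\chi^2}(\rho\,\|\,\sigma)=\sum_{i,j=1}^d\frac{2}{q_i+q_j}|\rho'_{ij}|^2-1$. *)

theory Defs
  imports "Jordan_Normal_Form.Matrix"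
begin

definition adj :: "complex mat \<Rightarrow> complex mat" where
  "adj A = mat (dim_col A) (dim_row A) (\<lambda>(i,j). cnj (A $$ (j,i)))"

definition unitary_mat :: "nat \<Rightarrow> complex mat \<Rightarrow> bool" where
  "unitary_mat d U \<longleftrightarrow> U \<in> carrier_mat d d \<and> U * adj U = 1\<^sub>m d \<and> adj U * U = 1\<^sub>m d"

definition psd_mat :: "nat \<Rightarrow> complex mat \<Rightarrow> bool" where
  "psd_mat d A \<longleftrightarrow> A \<in> carrier_mat d d \<and> adj A = A \<and>
     (\<forall>v \<in> carrier_vec d. (\<Sum>i<d. cnj (v $ i) * (A *\<^sub>v v) $ i) \<in> \<real> \<and>
                            Re (\<Sum>i<d. cnj (v $ i) * (A *\<^sub>v v) $ i) \<ge> 0)"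

definition qstate :: "nat \<Rightarrow> complex mat \<Rightarrow> bool" where
  "qstate d \<rho> \<longleftrightarrow> psd_mat d \<rho> \<and> (\<Sum>i<d. \<rho> $$ (i,i)) = 1"

definition real_diag_mat :: "nat \<Rightarrow> (nat \<Rightarrow> real) \<Rightarrow> complex mat" where
  "real_diag_mat d q = mat d d (\<lambda>(i,j). if i = j then complex_of_real (q i) else 0)"

text \<open>The expression of the Bures chi^2 divergence w.r.t. a given eigen-decomposition
  sigma = U diag(q) U^dagger, with rho' = U^dagger rho U.\<close>
definition chi2_expr :: "nat \<Rightarrow> complex mat \<Rightarrow> complex mat \<Rightarrow> (nat \<Rightarrow> real) \<Rightarrow> real" where
  "chi2_expr d \<rho> U q =
     (let \<rho>' = adj U * \<rho> * U in
      (\<Sum>i<d. \<Sum>j<d. 2 / (q i + q j) * (cmod (\<rho>' $$ (i,j)))\<^sup>2) - 1)"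

definition bures_chi2 :: "nat \<Rightarrow> complex mat \<Rightarrow> complex mat \<Rightarrow> real" where
  "bures_chi2 d \<rho> \<sigma> =
     (let Uq = (SOME (U, q). unitary_mat d U \<and> \<sigma> = U * real_diag_mat d q * adj U)
      in chi2_expr d \<rho> (fst Uq) (snd Uq))"

end

theory Submission
  imports Defs "Jordan_Normal_Form.Schur_Decomposition"
    "HOL-Computational_Algebra.Fundamental_Theorem_Algebra" "HOL-Analysis.Convex"
begin

text \<open>
  Diagonalise sigma = U diag(q) U* and let a(t,i) be the diagonal entries of U* rho(t) U.
  Since U* rho(t) U is positive semidefinite, its entries satisfy |r(i,j)|^2 \<le> a(t,i) a(t,j);
  together with 2/(q i + q j) \<le> (1/q i + 1/q j)/2 this gives
  1 + chi^2(rho(t), sigma) \<le> sum_i a(t,i)/q i. The bound is linear in rho(t), so its average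
  over t is sum_i a i/q i with a the diagonal of U* rho U. Writing a i = q i + e i,
  Cauchy-Schwarz gives sum_i a i/q i - d = sum_i e i/q i \<le> sqrt (sum_i e i^2/q i) sqrt (sum_i 1/q i),
  where sum_i 1/q i \<le> d/gamma because q i \<ge> gamma, and
  sum_i e i^2/q i = sum_i a i^2/q i - 1 \<le> chi^2(rho, sigma) by dropping the off-diagonal terms.
\<close>

lemma dim_row_adj [simp]: "dim_row (adj A) = dim_col A"
  and dim_col_adj [simp]: "dim_col (adj A) = dim_row A"
  by (simp_all add: adj_def)

lemma adj_carrier_mat [simp]: "A \<in> carrier_mat n m \<Longrightarrow> adj A \<in> carrier_mat m n"
  by (intro carrier_matI) auto

lemma index_adj [simp]: "i < dim_col A \<Longrightarrow> j < dim_row A \<Longrightarrow> adj A $$ (i, j) = cnj (A $$ (j, i))"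
  by (simp add: adj_def)

lemma adj_adj [simp]: "adj (adj A) = A"
  by (rule eq_matI) auto

lemma adj_one_mat [simp]: "adj (1\<^sub>m n) = 1\<^sub>m n"
  by (rule eq_matI) auto

lemma adj_mult_mat:
  assumes "A \<in> carrier_mat n k" "B \<in> carrier_mat k m"
  shows "adj (A * B) = adj B * adj A"
  by (rule eq_matI) (use assms in \<open>auto simp: scalar_prod_def mult.commute intro!: sum.cong\<close>)

lemma adj_four_block_mat:
  assumes "A \<in> carrier_mat n1 m1" "B \<in> carrier_mat n1 m2" "C \<in> carrier_mat n2 m1" "D \<in> carrier_mat n2 m2"
  shows "adj (four_block_mat A B C D) = four_block_mat (adj A) (adj C) (adj B) (adj D)"
  by (rule eq_matI) (use assms in auto)

lemma hermitian_index_cnj: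
  assumes "A \<in> carrier_mat n n" "adj A = A" "i < n" "j < n"
  shows "A $$ (j, i) = cnj (A $$ (i, j))"
proof -
  have "adj A $$ (j, i) = cnj (A $$ (i, j))"
    using assms(1,3,4) by simp
  then show ?thesis
    using assms(2) by simp
qed

lemma hermitian_congruence:
  assumes A: "A \<in> carrier_mat n n" "adj A = A" and U: "U \<in> carrier_mat n m"
  shows "adj (adj U * A * U) = adj U * A * U"
proof -
  have "adj (adj U * A * U) = adj U * adj (adj U * A)"
    using A U by (intro adj_mult_mat[of _ m n]) auto
  also have "adj (adj U * A) = A * U"
    using A U by (simp add: adj_mult_mat[of _ m n _ n])
  finally show ?thesis
    using A U by (simp add: assoc_mult_mat[of _ m n _ n _ m])
qed

lemma index_congruence:
  assumes A: "A \<in> carrier_mat n n" and U: "U \<in> carrier_mat n m" and ij: "i < m" "j < m"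
  shows "(adj U * A * U) $$ (i, j) = (\<Sum>k<n. \<Sum>l<n. cnj (U $$ (k, i)) * A $$ (k, l) * U $$ (l, j))"
proof -
  have "(adj U * A * U) $$ (i, j) = (\<Sum>l<n. (\<Sum>k<n. cnj (U $$ (k, i)) * A $$ (k, l)) * U $$ (l, j))"
    using A U ij by (auto simp: scalar_prod_def lessThan_atLeast0 intro!: sum.cong)
  also have "\<dots> = (\<Sum>k<n. \<Sum>l<n. cnj (U $$ (k, i)) * A $$ (k, l) * U $$ (l, j))"
    by (subst sum.swap) (simp add: sum_distrib_right)
  finally show ?thesis .
qed

lemma adj_mult_vec_cscalar_prod:
  assumes U: "U \<in> carrier_mat n m" and x: "x \<in> carrier_vec n" and y: "y \<in> carrier_vec m"
  shows "(adj U *\<^sub>v x) \<bullet>c y = x \<bullet>c (U *\<^sub>v y)"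
proof -
  have "(adj U *\<^sub>v x) \<bullet>c y = (\<Sum>i<m. \<Sum>k<n. x $ k * cnj (U $$ (k, i)) * cnj (y $ i))"
    using assms by (auto simp: scalar_prod_def lessThan_atLeast0 sum_distrib_left sum_distrib_right mult_ac
      intro!: sum.cong)
  also have "\<dots> = (\<Sum>k<n. \<Sum>i<m. x $ k * cnj (U $$ (k, i)) * cnj (y $ i))"
    by (rule sum.swap)
  also have "\<dots> = x \<bullet>c (U *\<^sub>v y)"
    using assms by (auto simp: scalar_prod_def lessThan_atLeast0 sum_distrib_left mult.assoc intro!: sum.cong)
  finally show ?thesis .
qed

lemma unitary_matD:
  assumes "unitary_mat n U"
  shows "U \<in> carrier_mat n n" "U * adj U = 1\<^sub>m n" "adj U * U = 1\<^sub>m n"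
  using assms by (auto simp: unitary_mat_def)

lemma unitary_matI:
  assumes "U \<in> carrier_mat n n" "adj U * U = 1\<^sub>m n"
  shows "unitary_mat n U"
  using assms mat_mult_left_right_inverse[of "adj U" n U] by (auto simp: unitary_mat_def)

lemma unitary_mat_mult:
  assumes "unitary_mat n U" "unitary_mat n V"
  shows "unitary_mat n (U * V)"
proof -
  note U = unitary_matD[OF assms(1)] and V = unitary_matD[OF assms(2)]
  have "adj (U * V) * (U * V) = adj V * (adj U * (U * V))"
    using U V by (simp add: adj_mult_mat[of _ n n _ n] assoc_mult_mat[of "adj V" n n "adj U" n "U * V" n])
  also have "adj U * (U * V) = adj U * U * V"
    using U V by (intro assoc_mult_mat[symmetric]) auto
  finally show ?thesis
    using U V by (intro unitary_matI) auto
qed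

lemma unitary_mat_four_block:
  assumes "unitary_mat m U"
  shows "unitary_mat (Suc m) (four_block_mat (1\<^sub>m 1) (0\<^sub>m 1 m) (0\<^sub>m m 1) U)"
proof -
  note U = unitary_matD[OF assms]
  let ?V = "four_block_mat (1\<^sub>m 1) (0\<^sub>m 1 m) (0\<^sub>m m 1) U"
  have "adj ?V = four_block_mat (1\<^sub>m 1) (0\<^sub>m 1 m) (0\<^sub>m m 1) (adj U)"
    using U by (subst adj_four_block_mat[of _ 1 1 _ m _ m]) auto
  then have "adj ?V * ?V = 1\<^sub>m (Suc m)"
    using U four_block_one_mat[of 1 m] by (simp add: mult_four_block_mat[of _ 1 1 _ m _ m _ _ 1 _ m])
  then show ?thesis
    using U by (intro unitary_matI) auto
qed

lemma similarity_cancel: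
  fixes A P Q :: "'a :: semiring_1 mat"
  assumes A: "A \<in> carrier_mat n n" and P: "P \<in> carrier_mat n n" and Q: "Q \<in> carrier_mat n n"
    and QP: "Q * P = 1\<^sub>m n"
  shows "Q * (P * A * Q) * P = A"
proof -
  have "Q * (P * A * Q) * P = Q * (P * A * Q * P)"
    using A P Q by (intro assoc_mult_mat) auto
  also have "P * A * Q * P = P * A * (Q * P)"
    using A P Q by (intro assoc_mult_mat) auto
  also have "Q * (P * A * (Q * P)) = Q * P * A"
    using A P Q QP right_mult_one_mat[of "P * A" n n] by (simp add: assoc_mult_mat[symmetric, of Q n n P n A n])
  finally show ?thesis
    using A QP by simp
qed

lemma real_diag_mat_carrier [simp]: "real_diag_mat n q \<in> carrier_mat n n"
  by (simp add: real_diag_mat_def)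

lemma unitary_congruence_diag:
  assumes U: "unitary_mat n U" and \<sigma>: "\<sigma> = U * real_diag_mat n q * adj U"
  shows "adj U * \<sigma> * U = real_diag_mat n q"
  unfolding \<sigma> using unitary_matD[OF U]
  by (intro similarity_cancel[OF real_diag_mat_carrier]) auto

text \<open>In the order of HOL-Library.Complex_Order used by Jordan_Normal_Form, 0 < z holds exactly
  for the positive reals z.\<close>

lemma cscalar_prod_self_pos:
  fixes w :: "complex vec"
  assumes "w \<in> carrier_vec n" "w \<noteq> 0\<^sub>v n"
  shows "w \<bullet>c w = complex_of_real (Re (w \<bullet>c w))" and "0 < Re (w \<bullet>c w)"
proof -
  have "0 < w \<bullet>c w"
    using assms by simp
  then show "w \<bullet>c w = complex_of_real (Re (w \<bullet>c w))" and "0 < Re (w \<bullet>c w)"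
    by (auto simp: less_complex_def complex_eq_iff)
qed

lemma unitary_mat_of_cols:
  assumes "set us \<subseteq> carrier_vec n" "length us = n"
    and orthonormal: "\<And>i j. i < n \<Longrightarrow> j < n \<Longrightarrow> us ! j \<bullet>c us ! i = (if i = j then 1 else 0)"
  shows "unitary_mat n (mat_of_cols n us)"
proof (rule unitary_matI)
  show "adj (mat_of_cols n us) * mat_of_cols n us = 1\<^sub>m n"
  proof (rule eq_matI)
    fix i j
    assume "i < dim_row (1\<^sub>m n)" "j < dim_col (1\<^sub>m n)"
    then have ij: "i < n" "j < n" and carr: "us ! i \<in> carrier_vec n" "us ! j \<in> carrier_vec n"
      using assms(1,2) by auto
    have "(adj (mat_of_cols n us) * mat_of_cols n us) $$ (i, j) = us ! j \<bullet>c us ! i"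
      using ij carr assms(2)
      by (auto simp: scalar_prod_def mat_of_cols_index mult.commute intro!: sum.cong)
    then show "(adj (mat_of_cols n us) * mat_of_cols n us) $$ (i, j) = 1\<^sub>m n $$ (i, j)"
      using orthonormal ij by simp
  qed (use assms in auto)
qed (use assms in auto)

lemma unitary_mat_of_corthogonal:
  fixes ws :: "complex vec list"
  assumes ws: "corthogonal ws" "set ws \<subseteq> carrier_vec n" "length ws = n"
  obtains c where "unitary_mat n (mat_of_cols n (map (\<lambda>i. c i \<cdot>\<^sub>v ws ! i) [0..<n]))"
proof -
  define r where "r i = Re (ws ! i \<bullet>c ws ! i)" for i
  define c where "c i = complex_of_real (1 / sqrt (r i))" for i
  define us where "us = map (\<lambda>i. c i \<cdot>\<^sub>v ws ! i) [0..<n]"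
  have ws_carr: "ws ! i \<in> carrier_vec n" if "i < n" for i
    using ws that by auto
  have ws_nz: "ws ! i \<noteq> 0\<^sub>v n" if "i < n" for i
    using corthogonalD[OF ws(1), of i i] that ws(3) ws_carr[OF that] by auto
  have r: "ws ! i \<bullet>c ws ! i = complex_of_real (r i)" "0 < r i" if "i < n" for i
    using cscalar_prod_self_pos[OF ws_carr ws_nz, OF that that] unfolding r_def by auto
  have us: "set us \<subseteq> carrier_vec n" "length us = n"
    using ws_carr by (auto simp: us_def)
  have "us ! j \<bullet>c us ! i = (if i = j then 1 else 0)" if ij: "i < n" "j < n" for i j
  proof -
    have "us ! j \<bullet>c us ! i = c j * c i * (ws ! j \<bullet>c ws ! i)"
      using ij ws_carr[OF ij(1)] ws_carr[OF ij(2)]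
      by (simp add: us_def c_def conjugate_smult_vec scalar_prod_smult_distrib[of _ n]
          smult_scalar_prod_distrib[of _ n])
    then show ?thesis
      using r[OF ij(1)] corthogonalD[OF ws(1), of j i] ij ws(3)
      by (auto simp: c_def simp flip: of_real_mult)
  qed
  then show ?thesis
    using that[of c] unitary_mat_of_cols[OF us] unfolding us_def by blast
qed

lemma unitary_mat_first_col:
  fixes v :: "complex vec"
  assumes v: "v \<in> carrier_vec n" "v \<noteq> 0\<^sub>v n"
  obtains W c where "unitary_mat n W" "col W 0 = c \<cdot>\<^sub>v v"
proof -
  interpret cof_vec_space n "TYPE(complex)" .
  note bc = basis_completion[OF v]
  define ws where "ws = gram_schmidt n (basis_completion v)"
  have ws: "corthogonal ws" "set ws \<subseteq> carrier_vec n" "length ws = n"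
    using gram_schmidt_result[OF bc(2) bc(4) bc(5) ws_def] bc(6) by auto
  have "0 < n"
    using v by (cases n) auto
  obtain rest where "basis_completion v = v # rest"
    by (auto simp: basis_completion_def Let_def)
  then have "ws ! 0 = v"
    using gram_schmidt_hd[OF v(1), of rest] ws(3) \<open>0 < n\<close>
    unfolding ws_def by (cases "gram_schmidt n (v # rest)") auto
  moreover obtain c where "unitary_mat n (mat_of_cols n (map (\<lambda>i. c i \<cdot>\<^sub>v ws ! i) [0..<n]))"
    using unitary_mat_of_corthogonal[OF ws] .
  moreover have "col (mat_of_cols n (map (\<lambda>i. c i \<cdot>\<^sub>v ws ! i) [0..<n])) 0 = c 0 \<cdot>\<^sub>v ws ! 0"
    using ws \<open>0 < n\<close> by (subst col_mat_of_cols) auto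
  ultimately show ?thesis
    using that by metis
qed

section \<open>Spectral theorem for Hermitian matrices\<close>

lemma complex_eigenvalue_exists:
  fixes A :: "complex mat"
  assumes "A \<in> carrier_mat n n" "0 < n"
  obtains e where "eigenvalue A e"
proof -
  have "degree (char_poly A) = n"
    using degree_monic_char_poly[OF assms(1)] by auto
  then have "\<not> constant (poly (char_poly A))"
    using assms(2) by (simp add: constant_degree)
  then obtain z where "poly (char_poly A) z = 0"
    using fundamental_theorem_of_algebra by blast
  then show ?thesis
    using that eigenvalue_root_char_poly[OF assms(1)] by auto
qed

lemma unitary_congruence_eigenvector_col:
  fixes A W :: "complex mat"
  assumes A: "A \<in> carrier_mat n n" and W: "unitary_mat n W" and i: "i < n"
    and eigen: "A *\<^sub>v col W 0 = e \<cdot>\<^sub>v col W 0"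
  shows "(adj W * A * W) $$ (i, 0) = (if i = 0 then e else 0)"
proof -
  note Wd = unitary_matD[OF W]
  have "col (adj W * A * W) 0 = (adj W * A) *\<^sub>v col W 0"
    using A Wd i by (intro col_mult2) auto
  also have "\<dots> = adj W *\<^sub>v (e \<cdot>\<^sub>v col W 0)"
    using A Wd i by (subst assoc_mult_mat_vec[of _ n n A n]) (auto simp: eigen)
  also have "\<dots> = e \<cdot>\<^sub>v unit_vec n 0"
  proof -
    have "adj W *\<^sub>v col W 0 = unit_vec n 0"
      using col_mult2[of "adj W" n n W n 0] Wd i by simp
    then show ?thesis
      using Wd i by (subst mult_mat_vec[of "adj W" n n]) auto
  qed
  finally have "col (adj W * A * W) 0 $ i = (e \<cdot>\<^sub>v unit_vec n 0) $ i"
    by simp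
  then show ?thesis
    using A Wd i by simp
qed

lemma hermitian_first_col_block:
  assumes A: "A \<in> carrier_mat (Suc m) (Suc m)" "adj A = A"
    and col0: "\<And>i. 0 < i \<Longrightarrow> i < Suc m \<Longrightarrow> A $$ (i, 0) = 0"
  defines "B \<equiv> mat m m (\<lambda>(i, j). A $$ (Suc i, Suc j))"
  shows "A = four_block_mat (real_diag_mat 1 (\<lambda>_. Re (A $$ (0, 0)))) (0\<^sub>m 1 m) (0\<^sub>m m 1) B"
    and "adj B = B"
proof -
  have herm: "A $$ (j, i) = cnj (A $$ (i, j))" if "i < Suc m" "j < Suc m" for i j
    using hermitian_index_cnj[OF A that] .
  have "A $$ (0, 0) = complex_of_real (Re (A $$ (0, 0)))"
    using herm[of 0 0] by (simp add: complex_eq_iff)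
  moreover have "A $$ (0, j) = 0" if "0 < j" "j < Suc m" for j
    using herm[of j 0] col0[OF that] that by simp
  ultimately show "A = four_block_mat (real_diag_mat 1 (\<lambda>_. Re (A $$ (0, 0)))) (0\<^sub>m 1 m) (0\<^sub>m m 1) B"
    using A(1) col0 by (intro eq_matI) (auto simp: B_def real_diag_mat_def)
  show "adj B = B"
  proof (rule eq_matI)
    fix i j
    assume "i < dim_row B" "j < dim_col B"
    then show "adj B $$ (i, j) = B $$ (i, j)"
      using herm[of "Suc j" "Suc i"] by (simp add: B_def)
  qed (simp_all add: B_def)
qed

lemma real_diag_mat_Suc:
  "real_diag_mat (Suc m) q
    = four_block_mat (real_diag_mat 1 (\<lambda>_. q 0)) (0\<^sub>m 1 m) (0\<^sub>m m 1) (real_diag_mat m (\<lambda>i. q (Suc i)))"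
  by (rule eq_matI) (auto simp: real_diag_mat_def)

lemma block_diag_similarity:
  assumes E: "E \<in> carrier_mat 1 1" and U: "U \<in> carrier_mat m m" and D: "D \<in> carrier_mat m m"
  defines "V \<equiv> four_block_mat (1\<^sub>m 1) (0\<^sub>m 1 m) (0\<^sub>m m 1) U"
  shows "V * four_block_mat E (0\<^sub>m 1 m) (0\<^sub>m m 1) D * adj V
    = four_block_mat E (0\<^sub>m 1 m) (0\<^sub>m m 1) (U * D * adj U)"
proof -
  have "adj V = four_block_mat (1\<^sub>m 1) (0\<^sub>m 1 m) (0\<^sub>m m 1) (adj U)"
    unfolding V_def using U by (subst adj_four_block_mat[of _ 1 1 _ m _ m]) auto
  moreover have "U * D * adj U \<in> carrier_mat m m"
    using U D by auto
  ultimately show ?thesis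
    unfolding V_def using E U D
    by (simp add: mult_four_block_mat[of _ 1 1 _ m _ m _ _ 1 _ m] left_add_zero_mat[of "U * D * adj U" m m])
qed

lemma hermitian_deflation:
  fixes A :: "complex mat"
  assumes A: "A \<in> carrier_mat (Suc m) (Suc m)" "adj A = A"
  obtains W r B where "unitary_mat (Suc m) W" "B \<in> carrier_mat m m" "adj B = B"
    "adj W * A * W = four_block_mat (real_diag_mat 1 (\<lambda>_. r)) (0\<^sub>m 1 m) (0\<^sub>m m 1) B"
proof -
  obtain e where "eigenvalue A e"
    using complex_eigenvalue_exists[OF A(1)] by blast
  then obtain v where v: "v \<in> carrier_vec (Suc m)" "v \<noteq> 0\<^sub>v (Suc m)" "A *\<^sub>v v = e \<cdot>\<^sub>v v"
    using A(1) unfolding eigenvalue_def eigenvector_def by auto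
  obtain W c where W: "unitary_mat (Suc m) W" "col W 0 = c \<cdot>\<^sub>v v"
    using unitary_mat_first_col[OF v(1,2)] .
  have eigen: "A *\<^sub>v col W 0 = e \<cdot>\<^sub>v col W 0"
    using A(1) v W(2) by (simp add: mult_mat_vec[of A "Suc m" "Suc m"] smult_smult_assoc mult.commute)
  have Wc: "W \<in> carrier_mat (Suc m) (Suc m)"
    using W(1) by (rule unitary_matD)
  have A': "adj W * A * W \<in> carrier_mat (Suc m) (Suc m)" "adj (adj W * A * W) = adj W * A * W"
    using A Wc hermitian_congruence[OF A Wc] by auto
  have col0: "(adj W * A * W) $$ (i, 0) = 0" if "0 < i" "i < Suc m" for i
    using unitary_congruence_eigenvector_col[OF A(1) W(1) that(2) eigen] that by simp
  note block = hermitian_first_col_block[OF A' col0]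
  show ?thesis
    by (rule that[OF W(1) _ block(2) block(1)]) simp
qed

lemma diagonalization_of_deflation:
  fixes A W U :: "complex mat"
  assumes A: "A \<in> carrier_mat (Suc m) (Suc m)" and W: "unitary_mat (Suc m) W" and U: "unitary_mat m U"
    and block: "adj W * A * W
      = four_block_mat (real_diag_mat 1 (\<lambda>_. r)) (0\<^sub>m 1 m) (0\<^sub>m m 1) (U * real_diag_mat m q * adj U)"
  defines "V \<equiv> W * four_block_mat (1\<^sub>m 1) (0\<^sub>m 1 m) (0\<^sub>m m 1) U"
  shows "unitary_mat (Suc m) V" and "A = V * real_diag_mat (Suc m) (case_nat r q) * adj V"
proof -
  define V' where "V' = four_block_mat (1\<^sub>m 1) (0\<^sub>m 1 m) (0\<^sub>m m 1) U"
  define D where "D = real_diag_mat (Suc m) (case_nat r q)"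
  have V': "unitary_mat (Suc m) V'"
    unfolding V'_def by (rule unitary_mat_four_block[OF U])
  then show "unitary_mat (Suc m) V"
    unfolding V_def V'_def[symmetric] by (rule unitary_mat_mult[OF W])
  note Wd = unitary_matD[OF W] and V'd = unitary_matD[OF V']
  have "adj W * A * W = V' * D * adj V'"
    unfolding block D_def real_diag_mat_Suc V'_def using unitary_matD(1)[OF U]
    by (subst block_diag_similarity) auto
  then have "A = W * (V' * D * adj V') * adj W"
    using similarity_cancel[OF A adj_carrier_mat[OF Wd(1)] Wd(1,2)] by simp
  also have "\<dots> = (W * V') * D * adj (W * V')"
    using Wd V'd
    by (simp add: D_def adj_mult_mat[of W _ _ V'] assoc_mult_mat[of _ "Suc m" "Suc m" _ "Suc m" _ "Suc m"]
        mult_carrier_mat[of _ "Suc m" "Suc m" _ "Suc m"])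
  finally show "A = V * real_diag_mat (Suc m) (case_nat r q) * adj V"
    unfolding V_def V'_def D_def .
qed

theorem hermitian_spectral_decomposition:
  fixes A :: "complex mat"
  assumes "A \<in> carrier_mat n n" "adj A = A"
  shows "\<exists>U q. unitary_mat n U \<and> A = U * real_diag_mat n q * adj U"
  using assms
proof (induction n arbitrary: A)
  case 0
  then have "A = 1\<^sub>m 0 * real_diag_mat 0 q * adj (1\<^sub>m 0)" for q
    by (intro eq_matI) auto
  moreover have "unitary_mat 0 (1\<^sub>m 0)"
    by (simp add: unitary_mat_def)
  ultimately show ?case
    by blast
next
  case (Suc m)
  obtain W r B where W: "unitary_mat (Suc m) W" and B: "B \<in> carrier_mat m m" "adj B = B"
    and block: "adj W * A * W = four_block_mat (real_diag_mat 1 (\<lambda>_. r)) (0\<^sub>m 1 m) (0\<^sub>m m 1) B"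
    using hermitian_deflation[OF Suc.prems] .
  obtain U q where "unitary_mat m U" "B = U * real_diag_mat m q * adj U"
    using Suc.IH[OF B] by blast
  then show ?case
    using diagonalization_of_deflation[OF Suc.prems(1) W] block by blast
qed

section \<open>Positive semidefinite matrices and quantum states\<close>

lemma quadratic_form_eq_cscalar_prod:
  assumes "A \<in> carrier_mat n n" "v \<in> carrier_vec n"
  shows "(\<Sum>i<n. cnj (v $ i) * (A *\<^sub>v v) $ i) = (A *\<^sub>v v) \<bullet>c v"
  using assms by (auto simp: scalar_prod_def lessThan_atLeast0 mult.commute intro!: sum.cong)

lemma psd_mat_congruence:
  assumes X: "psd_mat n X" and U: "U \<in> carrier_mat n m"
  shows "psd_mat m (adj U * X * U)"
proof -
  have Xc: "X \<in> carrier_mat n n" "adj X = X"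
    using X by (auto simp: psd_mat_def)
  have form: "(\<Sum>i<m. cnj (v $ i) * ((adj U * X * U) *\<^sub>v v) $ i)
      = (\<Sum>i<n. cnj ((U *\<^sub>v v) $ i) * (X *\<^sub>v (U *\<^sub>v v)) $ i)" if v: "v \<in> carrier_vec m" for v
  proof -
    have "(adj U * X * U) *\<^sub>v v = (adj U * X) *\<^sub>v (U *\<^sub>v v)"
      using Xc U v by (intro assoc_mult_mat_vec) auto
    also have "\<dots> = adj U *\<^sub>v (X *\<^sub>v (U *\<^sub>v v))"
      using Xc U v by (intro assoc_mult_mat_vec) auto
    finally have XUv: "(adj U * X * U) *\<^sub>v v = adj U *\<^sub>v (X *\<^sub>v (U *\<^sub>v v))" .
    have "(\<Sum>i<m. cnj (v $ i) * ((adj U * X * U) *\<^sub>v v) $ i) = (adj U *\<^sub>v (X *\<^sub>v (U *\<^sub>v v))) \<bullet>c v"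
      unfolding XUv[symmetric] using Xc U v by (intro quadratic_form_eq_cscalar_prod) auto
    also have "\<dots> = (X *\<^sub>v (U *\<^sub>v v)) \<bullet>c (U *\<^sub>v v)"
      using Xc U v by (intro adj_mult_vec_cscalar_prod) auto
    also have "\<dots> = (\<Sum>i<n. cnj ((U *\<^sub>v v) $ i) * (X *\<^sub>v (U *\<^sub>v v)) $ i)"
      using Xc U v by (intro quadratic_form_eq_cscalar_prod[symmetric]) auto
    finally show ?thesis .
  qed
  show ?thesis
    unfolding psd_mat_def
  proof (intro conjI ballI)
    show "adj U * X * U \<in> carrier_mat m m"
      using Xc U by auto
    show "adj (adj U * X * U) = adj U * X * U"
      by (rule hermitian_congruence[OF Xc U])
  next
    fix v :: "complex vec"
    assume v: "v \<in> carrier_vec m"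
    then have "U *\<^sub>v v \<in> carrier_vec n"
      using U by simp
    then show "(\<Sum>i<m. cnj (v $ i) * ((adj U * X * U) *\<^sub>v v) $ i) \<in> \<real>"
      and "0 \<le> Re (\<Sum>i<m. cnj (v $ i) * ((adj U * X * U) *\<^sub>v v) $ i)"
      unfolding form[OF v] using X unfolding psd_mat_def by blast+
  qed
qed

lemma quadratic_form_unit_vec:
  assumes "A \<in> carrier_mat n n" "i < n"
  shows "(\<Sum>k<n. cnj (unit_vec n i $ k) * (A *\<^sub>v unit_vec n i) $ k) = A $$ (i, i)"
proof -
  have "cnj (unit_vec n i $ k) * (A *\<^sub>v unit_vec n i) $ k = (if k = i then A $$ (i, i) else 0)" if "k < n" for k
    using assms that by simp
  then show ?thesis
    using assms(2) by simp
qed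

lemma quadratic_form_unit_vec_pair:
  fixes A :: "complex mat" and c :: complex
  assumes A: "A \<in> carrier_mat n n" and ij: "i < n" "j < n" "i \<noteq> j"
  defines "w \<equiv> unit_vec n i + c \<cdot>\<^sub>v unit_vec n j"
  shows "(\<Sum>k<n. cnj (w $ k) * (A *\<^sub>v w) $ k)
    = A $$ (i, i) + c * A $$ (i, j) + cnj c * (A $$ (j, i) + c * A $$ (j, j))"
proof -
  have Aw: "(A *\<^sub>v w) $ k = A $$ (k, i) + c * A $$ (k, j)" if "k < n" for k
    using A ij that by (simp add: w_def mult_add_distrib_mat_vec[of A n n] mult_mat_vec[of A n n])
  have "cnj (w $ k) * (A *\<^sub>v w) $ k
      = (if k = i then A $$ (i, i) + c * A $$ (i, j) else 0)
        + (if k = j then cnj c * (A $$ (j, i) + c * A $$ (j, j)) else 0)" if "k < n" for k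
    unfolding Aw[OF that] using ij that by (cases "k = i"; cases "k = j") (simp_all add: w_def)
  then show ?thesis
    using ij by (simp add: sum.distrib)
qed

lemma psd_mat_diag:
  assumes A: "psd_mat n A" and i: "i < n"
  shows "A $$ (i, i) = complex_of_real (Re (A $$ (i, i)))" and "0 \<le> Re (A $$ (i, i))"
proof -
  have "A \<in> carrier_mat n n"
    using A by (simp add: psd_mat_def)
  then have form: "(\<Sum>k<n. cnj (unit_vec n i $ k) * (A *\<^sub>v unit_vec n i) $ k) = A $$ (i, i)"
    using i by (rule quadratic_form_unit_vec)
  have "(\<Sum>k<n. cnj (unit_vec n i $ k) * (A *\<^sub>v unit_vec n i) $ k) \<in> \<real> \<and>
      0 \<le> Re (\<Sum>k<n. cnj (unit_vec n i $ k) * (A *\<^sub>v unit_vec n i) $ k)"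
    using A unit_vec_carrier unfolding psd_mat_def by blast
  then have "A $$ (i, i) \<in> \<real>" "0 \<le> Re (A $$ (i, i))"
    unfolding form by auto
  then show "A $$ (i, i) = complex_of_real (Re (A $$ (i, i)))" and "0 \<le> Re (A $$ (i, i))"
    by (auto simp: complex_is_Real_iff complex_eq_iff)
qed

lemma cmod_square_le_of_nonneg_quadratic:
  fixes a b :: real and z :: complex
  assumes "0 \<le> a" "0 \<le> b" and nonneg: "\<And>c. 0 \<le> a + 2 * Re (c * z) + (cmod c)\<^sup>2 * b"
  shows "(cmod z)\<^sup>2 \<le> a * b"
proof -
  define s where "s = (cmod z)\<^sup>2"
  have quad: "0 \<le> a - 2 * t * s + t\<^sup>2 * s * b" for t
  proof -
    have "cnj z * z = complex_of_real s"
      using complex_norm_square[of z] by (simp add: s_def mult.commute)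
    then have "Re (- (complex_of_real t * cnj z) * z) = - t * s"
      by (simp add: mult.assoc)
    moreover have "(cmod (- (complex_of_real t * cnj z)))\<^sup>2 = t\<^sup>2 * s"
      by (simp add: s_def norm_mult power_mult_distrib)
    ultimately show ?thesis
      using nonneg[of "- (complex_of_real t * cnj z)"] by simp
  qed
  show ?thesis
  proof (cases "b = 0")
    case True
    have "s \<le> 0"
    proof (rule ccontr)
      assume "\<not> s \<le> 0"
      then show False
        using quad[of "(a + 1) / (2 * s)"] True by (simp add: field_simps)
    qed
    then show ?thesis
      using assms(1,2) by (simp add: s_def)
  next
    case False
    then have "0 < b"
      using assms(2) by simp
    then show ?thesis
      using quad[of "1 / b"] by (simp add: s_def field_simps power2_eq_square)
  qed
qed

lemma psd_mat_entry_bound: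
  assumes A: "psd_mat n A" and ij: "i < n" "j < n"
  shows "(cmod (A $$ (i, j)))\<^sup>2 \<le> Re (A $$ (i, i)) * Re (A $$ (j, j))"
proof (cases "i = j")
  case True
  have "cmod (A $$ (i, i)) = \<bar>Re (A $$ (i, i))\<bar>"
    using psd_mat_diag(1)[OF A ij(1)] norm_of_real by metis
  then show ?thesis
    using True by (simp add: power2_eq_square)
next
  case False
  have Ac: "A \<in> carrier_mat n n" "adj A = A"
    using A by (auto simp: psd_mat_def)
  have "0 \<le> Re (A $$ (i, i)) + 2 * Re (c * A $$ (i, j)) + (cmod c)\<^sup>2 * Re (A $$ (j, j))" for c
  proof -
    define w where "w = unit_vec n i + c \<cdot>\<^sub>v unit_vec n j"
    have "w \<in> carrier_vec n"
      by (simp add: w_def)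
    then have nonneg: "0 \<le> Re (\<Sum>k<n. cnj (w $ k) * (A *\<^sub>v w) $ k)"
      using A unfolding psd_mat_def by blast
    have "cnj c * (c * A $$ (j, j)) = complex_of_real ((cmod c)\<^sup>2 * Re (A $$ (j, j)))"
      using psd_mat_diag(1)[OF A ij(2)] complex_norm_square[of c] by (metis mult.assoc mult.commute of_real_mult)
    then have "(\<Sum>k<n. cnj (w $ k) * (A *\<^sub>v w) $ k) = A $$ (i, i) + c * A $$ (i, j) + cnj (c * A $$ (i, j))
        + complex_of_real ((cmod c)\<^sup>2 * Re (A $$ (j, j)))"
      unfolding w_def quadratic_form_unit_vec_pair[OF Ac(1) ij False]
      using hermitian_index_cnj[OF Ac ij] by (simp add: distrib_left)
    then show ?thesis
      using nonneg by simp
  qed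
  then show ?thesis
    using cmod_square_le_of_nonneg_quadratic psd_mat_diag(2)[OF A] ij by blast
qed

lemma trace_mult_comm:
  fixes A B :: "'a :: comm_semiring_1 mat"
  assumes "A \<in> carrier_mat n m" "B \<in> carrier_mat m n"
  shows "(\<Sum>i<n. (A * B) $$ (i, i)) = (\<Sum>j<m. (B * A) $$ (j, j))"
proof -
  have "(\<Sum>i<n. (A * B) $$ (i, i)) = (\<Sum>i<n. \<Sum>j<m. A $$ (i, j) * B $$ (j, i))"
    using assms by (auto simp: scalar_prod_def lessThan_atLeast0 intro!: sum.cong)
  also have "\<dots> = (\<Sum>j<m. \<Sum>i<n. B $$ (j, i) * A $$ (i, j))"
    by (subst sum.swap) (simp add: mult.commute)
  also have "\<dots> = (\<Sum>j<m. (B * A) $$ (j, j))"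
    using assms by (auto simp: scalar_prod_def lessThan_atLeast0 intro!: sum.cong)
  finally show ?thesis .
qed

lemma trace_unitary_congruence:
  assumes U: "unitary_mat n U" and X: "X \<in> carrier_mat n n"
  shows "(\<Sum>i<n. (adj U * X * U) $$ (i, i)) = (\<Sum>i<n. X $$ (i, i))"
proof -
  note Ud = unitary_matD[OF U]
  have "(\<Sum>i<n. (adj U * X * U) $$ (i, i)) = (\<Sum>i<n. (U * (adj U * X)) $$ (i, i))"
    using Ud X by (intro trace_mult_comm) auto
  also have "U * (adj U * X) = X"
    using Ud X by (simp add: assoc_mult_mat[symmetric, of U n n "adj U" n X n])
  finally show ?thesis .
qed

lemma qstate_unitary_congruence:
  assumes "qstate n X" "unitary_mat n U"
  shows "qstate n (adj U * X * U)"
  using assms psd_mat_congruence[of n X U] trace_unitary_congruence[of n U X] unitary_matD(1)[OF assms(2)]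
  unfolding qstate_def psd_mat_def by auto

lemma qstate_diag_sum:
  assumes "qstate n R"
  shows "(\<Sum>i<n. Re (R $$ (i, i))) = 1"
proof -
  have "(\<Sum>i<n. R $$ (i, i)) = 1"
    using assms by (simp add: qstate_def)
  then show ?thesis
    by (metis Re_sum one_complex.sel(1))
qed

lemma congruence_average_entry:
  assumes U: "U \<in> carrier_mat n m" and ij: "i < m" "j < m"
    and A: "\<And>t. t \<in> S \<Longrightarrow> A t \<in> carrier_mat n n"
  shows "(adj U * mat n n (\<lambda>kl. c * (\<Sum>t\<in>S. A t $$ kl)) * U) $$ (i, j)
    = c * (\<Sum>t\<in>S. (adj U * A t * U) $$ (i, j))"
proof -
  have "(adj U * mat n n (\<lambda>kl. c * (\<Sum>t\<in>S. A t $$ kl)) * U) $$ (i, j)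
      = (\<Sum>k<n. \<Sum>l<n. \<Sum>t\<in>S. c * (cnj (U $$ (k, i)) * A t $$ (k, l) * U $$ (l, j)))"
    using U ij by (subst index_congruence[of _ n])
      (auto simp: sum_distrib_left sum_distrib_right mult_ac intro!: sum.cong)
  also have "\<dots> = c * (\<Sum>t\<in>S. \<Sum>k<n. \<Sum>l<n. cnj (U $$ (k, i)) * A t $$ (k, l) * U $$ (l, j))"
    by (simp add: sum_distrib_left sum.swap[of _ S])
  also have "\<dots> = c * (\<Sum>t\<in>S. (adj U * A t * U) $$ (i, j))"
    using index_congruence[OF A U ij] by simp
  finally show ?thesis .
qed

lemma qstate_average_congruence_diag:
  assumes U: "unitary_mat n U" and i: "i < n" and \<rho>s: "\<And>t. t \<in> {1..T} \<Longrightarrow> qstate n (\<rho>s t)"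
  shows "Re ((adj U * mat n n (\<lambda>kl. (1 / of_nat T) * (\<Sum>t = 1..T. \<rho>s t $$ kl)) * U) $$ (i, i))
    = (\<Sum>t = 1..T. Re ((adj U * \<rho>s t * U) $$ (i, i))) / real T"
  using congruence_average_entry[OF unitary_matD(1)[OF U] i i, of "{1..T}" \<rho>s "1 / of_nat T"] \<rho>s
  by (simp add: qstate_def psd_mat_def)

lemma qstate_average_congruence_diag_sum:
  assumes U: "unitary_mat n U" and "0 < T" and \<rho>s: "\<And>t. t \<in> {1..T} \<Longrightarrow> qstate n (\<rho>s t)"
  shows "(\<Sum>i<n. Re ((adj U * mat n n (\<lambda>kl. (1 / of_nat T) * (\<Sum>t = 1..T. \<rho>s t $$ kl)) * U) $$ (i, i))) = 1"
proof -
  have "(\<Sum>i<n. Re ((adj U * mat n n (\<lambda>kl. (1 / of_nat T) * (\<Sum>t = 1..T. \<rho>s t $$ kl)) * U) $$ (i, i)))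
      = (\<Sum>i<n. \<Sum>t = 1..T. Re ((adj U * \<rho>s t * U) $$ (i, i)) / real T)"
    using qstate_average_congruence_diag[OF U _ \<rho>s] by (simp add: sum_divide_distrib)
  also have "\<dots> = (\<Sum>t = 1..T. (\<Sum>i<n. Re ((adj U * \<rho>s t * U) $$ (i, i))) / real T)"
    by (subst sum.swap) (simp add: sum_divide_distrib)
  also have "\<dots> = 1"
    using qstate_diag_sum[OF qstate_unitary_congruence[OF \<rho>s U]] \<open>0 < T\<close> by simp
  finally show ?thesis .
qed

section \<open>The Bures chi-squared divergence\<close>

lemma diag_decomposition_lower_bound:
  fixes \<gamma> :: real
  assumes U: "unitary_mat n U" and \<sigma>: "\<sigma> = U * real_diag_mat n q * adj U"
    and psd: "psd_mat n (\<sigma> - complex_of_real \<gamma> \<cdot>\<^sub>m 1\<^sub>m n)" and i: "i < n"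
  shows "\<gamma> \<le> q i"
proof -
  note Ud = unitary_matD[OF U]
  define c where "c = complex_of_real \<gamma>"
  have "U * real_diag_mat n q \<in> carrier_mat n n"
    using Ud(1) by simp
  then have \<sigma>c: "\<sigma> \<in> carrier_mat n n"
    unfolding \<sigma> using adj_carrier_mat[OF Ud(1)] by (rule mult_carrier_mat)
  have "adj U * (\<sigma> - c \<cdot>\<^sub>m 1\<^sub>m n) * U = (adj U * \<sigma> - c \<cdot>\<^sub>m adj U) * U"
    using Ud \<sigma>c mult_smult_distrib[of "adj U" n n "1\<^sub>m n" n c]
    by (simp add: mult_minus_distrib_mat[of "adj U" n n])
  also have "\<dots> = adj U * \<sigma> * U - c \<cdot>\<^sub>m 1\<^sub>m n"
    using Ud \<sigma>c mult_smult_assoc_mat[of "adj U" n n U n c]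
    by (subst minus_mult_distrib_mat[of "adj U * \<sigma>" n n "c \<cdot>\<^sub>m adj U" U n]) auto
  also have "\<dots> = real_diag_mat n q - c \<cdot>\<^sub>m 1\<^sub>m n"
    unfolding unitary_congruence_diag[OF U \<sigma>] ..
  finally have "psd_mat n (real_diag_mat n q - c \<cdot>\<^sub>m 1\<^sub>m n)"
    using psd_mat_congruence[OF psd Ud(1)] unfolding c_def by simp
  from psd_mat_diag(2)[OF this i] show ?thesis
    using i by (simp add: real_diag_mat_def c_def)
qed

lemma diag_decomposition_sum:
  assumes "qstate n \<sigma>" "unitary_mat n U" "\<sigma> = U * real_diag_mat n q * adj U"
  shows "(\<Sum>i<n. q i) = 1"
proof -
  have "qstate n (real_diag_mat n q)"
    using qstate_unitary_congruence[OF assms(1,2)] unfolding unitary_congruence_diag[OF assms(2,3)] .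
  then show ?thesis
    using qstate_diag_sum[of n "real_diag_mat n q"] by (simp add: real_diag_mat_def)
qed

text \<open>The spectral theorem is what makes the SOME in bures_chi2 pick an actual
  eigendecomposition of sigma; without it the divergence would be unspecified.\<close>

lemma bures_chi2_eq_chi2_expr:
  assumes "\<sigma> \<in> carrier_mat n n" "adj \<sigma> = \<sigma>"
  obtains U q where "unitary_mat n U" "\<sigma> = U * real_diag_mat n q * adj U"
    "\<And>X. bures_chi2 n X \<sigma> = chi2_expr n X U q"
proof -
  define Uq where "Uq = (SOME (U, q). unitary_mat n U \<and> \<sigma> = U * real_diag_mat n q * adj U)"
  have "\<exists>Uq. case Uq of (U, q) \<Rightarrow> unitary_mat n U \<and> \<sigma> = U * real_diag_mat n q * adj U"
    using hermitian_spectral_decomposition[OF assms] by auto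
  then have "case Uq of (U, q) \<Rightarrow> unitary_mat n U \<and> \<sigma> = U * real_diag_mat n q * adj U"
    unfolding Uq_def by (rule someI_ex)
  moreover have "bures_chi2 n X \<sigma> = chi2_expr n X (fst Uq) (snd Uq)" for X
    unfolding bures_chi2_def Uq_def Let_def ..
  ultimately show ?thesis
    using that by (cases Uq) auto
qed

lemma bures_chi2_spectral:
  fixes \<gamma> :: real
  assumes \<sigma>: "qstate n \<sigma>" and \<gamma>: "psd_mat n (\<sigma> - complex_of_real \<gamma> \<cdot>\<^sub>m 1\<^sub>m n)"
  obtains U q where "unitary_mat n U" "\<And>i. i < n \<Longrightarrow> \<gamma> \<le> q i" "(\<Sum>i<n. q i) = 1"
    "\<And>X. bures_chi2 n X \<sigma> = chi2_expr n X U q"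
proof -
  have "\<sigma> \<in> carrier_mat n n" "adj \<sigma> = \<sigma>"
    using \<sigma> by (simp_all add: qstate_def psd_mat_def)
  then obtain U q where U: "unitary_mat n U" and dec: "\<sigma> = U * real_diag_mat n q * adj U"
    and "\<And>X. bures_chi2 n X \<sigma> = chi2_expr n X U q"
    using bures_chi2_eq_chi2_expr by blast
  then show ?thesis
    using that diag_decomposition_lower_bound[OF U dec \<gamma>] diag_decomposition_sum[OF \<sigma> U dec] by blast
qed

lemma harmonic_le_arithmetic_mean_inverse:
  fixes x y :: real
  assumes "0 < x" "0 < y"
  shows "2 / (x + y) \<le> (1 / x + 1 / y) / 2"
proof -
  have "4 * (x * y) \<le> (x + y) * (x + y)"
    using sum_squares_ge_zero[of "x - y" 0] by (simp add: algebra_simps power2_eq_square)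
  then show ?thesis
    using assms by (simp add: field_simps)
qed

lemma bures_sum_le_diag_ratio:
  assumes R: "qstate n R" and q: "\<And>i. i < n \<Longrightarrow> 0 < q i"
  shows "(\<Sum>i<n. \<Sum>j<n. 2 / (q i + q j) * (cmod (R $$ (i, j)))\<^sup>2) \<le> (\<Sum>i<n. Re (R $$ (i, i)) / q i)"
proof -
  define a where "a i = Re (R $$ (i, i))" for i
  have psd: "psd_mat n R"
    using R by (simp add: qstate_def)
  have a_nonneg: "0 \<le> a i" if "i < n" for i
    unfolding a_def by (rule psd_mat_diag(2)[OF psd that])
  have a_sum: "(\<Sum>i<n. a i) = 1"
    unfolding a_def by (rule qstate_diag_sum[OF R])
  have "(\<Sum>i<n. \<Sum>j<n. 2 / (q i + q j) * (cmod (R $$ (i, j)))\<^sup>2)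
      \<le> (\<Sum>i<n. \<Sum>j<n. 2 / (q i + q j) * (a i * a j))"
    using psd_mat_entry_bound[OF psd] q
    by (intro sum_mono mult_left_mono) (auto simp: a_def less_imp_le add_pos_pos)
  also have "\<dots> \<le> (\<Sum>i<n. \<Sum>j<n. (1 / q i + 1 / q j) / 2 * (a i * a j))"
    using harmonic_le_arithmetic_mean_inverse q a_nonneg
    by (intro sum_mono mult_right_mono) auto
  also have "\<dots> = (\<Sum>i<n. \<Sum>j<n. (a i * a j / q i + a i * a j / q j) / 2)"
    by (intro sum.cong refl) (simp add: add_divide_distrib distrib_right)
  also have "\<dots> = ((\<Sum>i<n. \<Sum>j<n. a i * a j / q i) + (\<Sum>i<n. \<Sum>j<n. a i * a j / q j)) / 2"
    by (simp only: add_divide_distrib sum.distrib sum_divide_distrib)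
  also have "\<dots> = (\<Sum>i<n. \<Sum>j<n. a i * a j / q i)"
  proof -
    have "(\<Sum>i<n. \<Sum>j<n. a i * a j / q j) = (\<Sum>i<n. \<Sum>j<n. a i * a j / q i)"
      by (subst sum.swap) (simp add: mult.commute)
    then show ?thesis
      by simp
  qed
  also have "\<dots> = (\<Sum>i<n. a i / q i * (\<Sum>j<n. a j))"
    by (simp add: sum_distrib_left)
  also have "\<dots> = (\<Sum>i<n. Re (R $$ (i, i)) / q i)"
    unfolding a_sum by (simp add: a_def)
  finally show ?thesis .
qed

lemma diag_ratio_le_bures_sum:
  assumes q: "\<And>i. i < n \<Longrightarrow> 0 < q i"
  shows "(\<Sum>i<n. (Re (R $$ (i, i)))\<^sup>2 / q i) \<le> (\<Sum>i<n. \<Sum>j<n. 2 / (q i + q j) * (cmod (R $$ (i, j)))\<^sup>2)"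
proof -
  have "(\<Sum>i<n. (Re (R $$ (i, i)))\<^sup>2 / q i) \<le> (\<Sum>i<n. 2 / (q i + q i) * (cmod (R $$ (i, i)))\<^sup>2)"
  proof (intro sum_mono)
    fix i
    assume "i \<in> {..<n}"
    then have "0 < q i"
      using q by simp
    moreover have "(Re (R $$ (i, i)))\<^sup>2 \<le> (cmod (R $$ (i, i)))\<^sup>2"
      by (simp add: cmod_power2)
    ultimately show "(Re (R $$ (i, i)))\<^sup>2 / q i \<le> 2 / (q i + q i) * (cmod (R $$ (i, i)))\<^sup>2"
      by (simp add: divide_right_mono)
  qed
  also have "\<dots> \<le> (\<Sum>i<n. \<Sum>j<n. 2 / (q i + q j) * (cmod (R $$ (i, j)))\<^sup>2)"
    using q by (intro sum_mono member_le_sum) (auto simp: less_imp_le add_pos_pos)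
  finally show ?thesis .
qed

lemma one_plus_chi2_expr_le:
  assumes "qstate n X" "unitary_mat n U" "\<And>i. i < n \<Longrightarrow> 0 < q i"
  shows "1 + chi2_expr n X U q \<le> (\<Sum>i<n. Re ((adj U * X * U) $$ (i, i)) / q i)"
proof -
  have "(\<Sum>i<n. \<Sum>j<n. 2 / (q i + q j) * (cmod ((adj U * X * U) $$ (i, j)))\<^sup>2)
      \<le> (\<Sum>i<n. Re ((adj U * X * U) $$ (i, i)) / q i)"
    by (rule bures_sum_le_diag_ratio[OF qstate_unitary_congruence[OF assms(1,2)]]) (rule assms(3))
  then show ?thesis
    unfolding chi2_expr_def Let_def by linarith
qed

lemma diag_ratio_le_chi2_expr:
  assumes "\<And>i. i < n \<Longrightarrow> 0 < q i"
  shows "(\<Sum>i<n. (Re ((adj U * X * U) $$ (i, i)))\<^sup>2 / q i) - 1 \<le> chi2_expr n X U q"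
proof -
  have "(\<Sum>i<n. (Re ((adj U * X * U) $$ (i, i)))\<^sup>2 / q i)
      \<le> (\<Sum>i<n. \<Sum>j<n. 2 / (q i + q j) * (cmod ((adj U * X * U) $$ (i, j)))\<^sup>2)"
    by (rule diag_ratio_le_bures_sum) (rule assms)
  then show ?thesis
    unfolding chi2_expr_def Let_def by linarith
qed

lemma average_one_plus_chi2_expr_le:
  assumes U: "unitary_mat n U" and q: "\<And>i. i < n \<Longrightarrow> 0 < q i"
    and \<rho>s: "\<And>t. t \<in> {1..T} \<Longrightarrow> qstate n (\<rho>s t)"
  shows "(1 / real T) * (\<Sum>t = 1..T. 1 + chi2_expr n (\<rho>s t) U q)
    \<le> (\<Sum>i<n. Re ((adj U * mat n n (\<lambda>kl. (1 / of_nat T) * (\<Sum>t = 1..T. \<rho>s t $$ kl)) * U) $$ (i, i)) / q i)"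
proof -
  define a where "a t i = Re ((adj U * \<rho>s t * U) $$ (i, i))" for t i
  have "(1 / real T) * (\<Sum>t = 1..T. 1 + chi2_expr n (\<rho>s t) U q)
      \<le> (1 / real T) * (\<Sum>t = 1..T. \<Sum>i<n. a t i / q i)"
    unfolding a_def using one_plus_chi2_expr_le[OF \<rho>s U q] by (intro mult_left_mono sum_mono) auto
  also have "\<dots> = (\<Sum>t = 1..T. \<Sum>i<n. 1 / real T * (a t i / q i))"
    by (simp only: sum_distrib_left)
  also have "\<dots> = (\<Sum>i<n. \<Sum>t = 1..T. 1 / real T * (a t i / q i))"
    by (rule sum.swap)
  also have "\<dots> = (\<Sum>i<n. Re ((adj U * mat n n (\<lambda>kl. (1 / of_nat T) * (\<Sum>t = 1..T. \<rho>s t $$ kl)) * U) $$ (i, i)) / q i)"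
    using qstate_average_congruence_diag[OF U _ \<rho>s] by (simp add: a_def sum_divide_distrib)
  finally show ?thesis .
qed

lemma sum_div_square_le:
  fixes e q :: "nat \<Rightarrow> real"
  assumes q: "\<And>i. i < n \<Longrightarrow> 0 < q i"
  shows "(\<Sum>i<n. e i / q i)\<^sup>2 \<le> (\<Sum>i<n. (e i)\<^sup>2 / q i) * (\<Sum>i<n. 1 / q i)"
proof -
  have pw: "e i / sqrt (q i) * (1 / sqrt (q i)) = e i / q i"
    "(e i / sqrt (q i))\<^sup>2 = (e i)\<^sup>2 / q i" "(1 / sqrt (q i))\<^sup>2 = 1 / q i" if "i < n" for i
    using q[OF that] by (simp_all add: power_divide)
  have "(\<Sum>i<n. e i / sqrt (q i) * (1 / sqrt (q i))) = (\<Sum>i<n. e i / q i)"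
    and "(\<Sum>i<n. (e i / sqrt (q i))\<^sup>2) = (\<Sum>i<n. (e i)\<^sup>2 / q i)"
    and "(\<Sum>i<n. (1 / sqrt (q i))\<^sup>2) = (\<Sum>i<n. 1 / q i)"
    using pw by (auto intro: sum.cong)
  then show ?thesis
    using Cauchy_Schwarz_ineq_sum[of "\<lambda>i. e i / sqrt (q i)" "\<lambda>i. 1 / sqrt (q i)" "{..<n}"] by simp
qed

lemma sum_div_le_sqrt_chi2:
  fixes a q :: "nat \<Rightarrow> real" and \<gamma> :: real
  assumes q_ge: "\<And>i. i < n \<Longrightarrow> \<gamma> \<le> q i" and \<gamma>: "0 < \<gamma>"
    and q_sum: "(\<Sum>i<n. q i) = 1" and a_sum: "(\<Sum>i<n. a i) = 1"
  shows "(\<Sum>i<n. a i / q i) \<le> sqrt (real n / \<gamma>) * sqrt ((\<Sum>i<n. (a i)\<^sup>2 / q i) - 1) + real n"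
proof -
  have q: "0 < q i" if "i < n" for i
    using q_ge[OF that] \<gamma> by linarith
  define e where "e i = a i - q i" for i
  have lin: "(\<Sum>i<n. a i / q i) - real n = (\<Sum>i<n. e i / q i)"
  proof -
    have "e i / q i = a i / q i - 1" if "i < n" for i
      using q[OF that] by (simp add: e_def diff_divide_distrib)
    then have "(\<Sum>i<n. e i / q i) = (\<Sum>i<n. a i / q i - 1)"
      by simp
    then show ?thesis
      by (simp add: sum_subtractf)
  qed
  have quad: "(\<Sum>i<n. (a i)\<^sup>2 / q i) - 1 = (\<Sum>i<n. (e i)\<^sup>2 / q i)"
  proof -
    have "(e i)\<^sup>2 / q i = (a i)\<^sup>2 / q i - 2 * a i + q i" if "i < n" for i
      using q[OF that] by (simp add: e_def power2_eq_square field_simps)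
    then have "(\<Sum>i<n. (e i)\<^sup>2 / q i) = (\<Sum>i<n. (a i)\<^sup>2 / q i - 2 * a i + q i)"
      by simp
    then show ?thesis
      using a_sum q_sum by (simp add: sum.distrib sum_subtractf sum_distrib_left[symmetric])
  qed
  have "(\<Sum>i<n. e i / q i)\<^sup>2 \<le> (\<Sum>i<n. (e i)\<^sup>2 / q i) * (\<Sum>i<n. 1 / q i)"
    by (rule sum_div_square_le) (rule q)
  also have "\<dots> \<le> (\<Sum>i<n. (e i)\<^sup>2 / q i) * (real n / \<gamma>)"
  proof (rule mult_left_mono)
    have "(\<Sum>i<n. 1 / q i) \<le> (\<Sum>i<n. 1 / \<gamma>)"
      using q_ge q \<gamma> by (intro sum_mono) (simp add: frac_le)
    then show "(\<Sum>i<n. 1 / q i) \<le> real n / \<gamma>"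
      by simp
    show "0 \<le> (\<Sum>i<n. (e i)\<^sup>2 / q i)"
      using q by (intro sum_nonneg) (simp add: less_imp_le)
  qed
  finally have "(\<Sum>i<n. e i / q i) \<le> sqrt ((\<Sum>i<n. (e i)\<^sup>2 / q i) * (real n / \<gamma>))"
    by (rule real_le_rsqrt)
  also have "\<dots> = sqrt (real n / \<gamma>) * sqrt (\<Sum>i<n. (e i)\<^sup>2 / q i)"
    by (simp only: real_sqrt_mult mult.commute)
  finally show ?thesis
    unfolding quad using lin by linarith
qed

theorem lemma8p5:
  fixes d T :: nat and \<gamma> :: real and \<sigma> :: "complex mat" and \<rho>s :: "nat \<Rightarrow> complex mat"
  assumes "qstate d \<sigma>"
    and "\<gamma> > 0"
    and "psd_mat d (\<sigma> - complex_of_real \<gamma> \<cdot>\<^sub>m 1\<^sub>m d)"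
    and "T > 0"
    and "\<And>t. t \<in> {1..T} \<Longrightarrow> qstate d (\<rho>s t)"
  shows "(let \<rho> = mat d d (\<lambda>ij. (1 / of_nat T) * (\<Sum>t = 1..T. \<rho>s t $$ ij)) in
          (1 / real T) * (\<Sum>t = 1..T. 1 + bures_chi2 d (\<rho>s t) \<sigma>)
            \<le> sqrt (real d / \<gamma>) * sqrt (bures_chi2 d \<rho> \<sigma>) + real d)"
proof -
  obtain U q where U: "unitary_mat d U" and q_ge: "\<And>i. i < d \<Longrightarrow> \<gamma> \<le> q i"
    and q_sum: "(\<Sum>i<d. q i) = 1" and chi2: "\<And>X. bures_chi2 d X \<sigma> = chi2_expr d X U q"
    using bures_chi2_spectral[OF assms(1,3)] by blast
  have q_pos: "0 < q i" if "i < d" for i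
    using q_ge[OF that] assms(2) by linarith
  define \<rho> where "\<rho> = mat d d (\<lambda>ij. (1 / of_nat T) * (\<Sum>t = 1..T. \<rho>s t $$ ij))"
  define a where "a i = Re ((adj U * \<rho> * U) $$ (i, i))" for i
  have a_sum: "(\<Sum>i<d. a i) = 1"
    unfolding a_def \<rho>_def by (rule qstate_average_congruence_diag_sum[OF U assms(4,5)])
  have "(1 / real T) * (\<Sum>t = 1..T. 1 + bures_chi2 d (\<rho>s t) \<sigma>) \<le> (\<Sum>i<d. a i / q i)"
    unfolding chi2 a_def \<rho>_def by (rule average_one_plus_chi2_expr_le[OF U q_pos assms(5)])
  also have "\<dots> \<le> sqrt (real d / \<gamma>) * sqrt ((\<Sum>i<d. (a i)\<^sup>2 / q i) - 1) + real d"
    by (rule sum_div_le_sqrt_chi2[OF q_ge assms(2) q_sum a_sum])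
  also have "\<dots> \<le> sqrt (real d / \<gamma>) * sqrt (bures_chi2 d \<rho> \<sigma>) + real d"
  proof -
    have "(\<Sum>i<d. (a i)\<^sup>2 / q i) - 1 \<le> bures_chi2 d \<rho> \<sigma>"
      unfolding chi2 a_def by (rule diag_ratio_le_chi2_expr) (rule q_pos)
    then show ?thesis
      using assms(2) by (intro add_right_mono mult_left_mono real_sqrt_le_mono) auto
  qed
  finally show ?thesis
    unfolding \<rho>_def Let_def .
qed

end
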